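(* Let $G$ be a finite group, $p$ a prime dividing $|G|$, $P\in\mathrm{Syl}_p(G)$ and $\Omega=\Omega_1(Z(P))$. If $C\le P$ is fully centralized, then $C\Omega\le P$ is fully centralized and $C_P(C\Omega)=C_P(C)$.
   Context: $\Omega_1(H)$ is the subgroup generated by the elements of order $p$ of $H$. A subgroup $Q\le P$ is fully centralized if $C_P(Q)$ is a Sylow $p$-subgroup of $C_G(Q)$ (equivalently, $|C_P(Q^g)|\le|C_P(Q)|$ for all $g\in G$ with $Q^g\le P$). *)

theory Defs
  imports "HOL-Algebra.Algebra" "HOL-Computational_Algebra.Primes"
begin

definition centralizer :: "('a, 'b) monoid_scheme \<Rightarrow> 'a set \<Rightarrow> 'a set" where
  "centralizer G H = {g \<in> carrier G. \<forall>h\<in>H. g \<otimes>\<^bsub>G\<^esub> h = h \<otimes>\<^bsub>G\<^esub> g}"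

definition subgroup_center :: "('a, 'b) monoid_scheme \<Rightarrow> 'a set \<Rightarrow> 'a set" where
  "subgroup_center G P = P \<inter> centralizer G P"

definition is_sylow :: "('a, 'b) monoid_scheme \<Rightarrow> nat \<Rightarrow> 'a set \<Rightarrow> bool" where
  "is_sylow H p S \<longleftrightarrow> subgroup S H \<and> card S = p ^ multiplicity p (order H)"

definition Omega1 :: "('a, 'b) monoid_scheme \<Rightarrow> nat \<Rightarrow> 'a set \<Rightarrow> 'a set" where
  "Omega1 G p H = generate G {x \<in> H. group.ord G x = p}"

definition fully_centralized :: "('a, 'b) monoid_scheme \<Rightarrow> nat \<Rightarrow> 'a set \<Rightarrow> 'a set \<Rightarrow> bool" where
  "fully_centralized G p P Q \<longleftrightarrow>
     subgroup Q G \<and> Q \<subseteq> P \<and>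
     is_sylow (G\<lparr>carrier := centralizer G Q\<rparr>) p (P \<inter> centralizer G Q)"

end

theory Submission
  imports Defs
begin

text \<open>Every subgroup W of Z(P) (in particular Omega_1(Z(P))) centralizes P, so C W is a
subgroup of P, and an element of P centralizing C also centralizes C W: hence
C_P(C W) = C_P(C). As C_G(C W) \<le> C_G(C), the Sylow p-subgroup C_P(C) of C_G(C) lies in
the intermediate group C_G(C W) and is therefore Sylow there as well.\<close>

lemma centralizer_antimono:
  fixes G (structure)
  assumes "A \<subseteq> B"
  shows "centralizer G B \<subseteq> centralizer G A"
  using assms unfolding centralizer_def by blast

lemma subset_centralizer_iff:
  fixes G (structure)
  assumes "A \<subseteq> carrier G" "B \<subseteq> carrier G"
  shows "A \<subseteq> centralizer G B \<longleftrightarrow> B \<subseteq> centralizer G A"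
  using assms unfolding centralizer_def by (auto 0 3)

lemma (in group) subgroup_centralizer:
  assumes "A \<subseteq> carrier G"
  shows "subgroup (centralizer G A) G"
proof (rule subgroupI)
  show "centralizer G A \<subseteq> carrier G" "centralizer G A \<noteq> {}"
    using assms by (auto simp: centralizer_def intro!: exI[of _ \<one>])
next
  fix g g' assume g: "g \<in> centralizer G A" and g': "g' \<in> centralizer G A"
  have gG: "g \<in> carrier G" "g' \<in> carrier G"
    and comm: "\<And>h. h \<in> A \<Longrightarrow> g \<otimes> h = h \<otimes> g" "\<And>h. h \<in> A \<Longrightarrow> g' \<otimes> h = h \<otimes> g'"
    using g g' unfolding centralizer_def by auto
  have "inv g \<otimes> h = h \<otimes> inv g" if "h \<in> A" for h
  proof -
    have hG: "h \<in> carrier G" using assms that by blast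
    have "inv g \<otimes> h = inv g \<otimes> (h \<otimes> g) \<otimes> inv g"
      using gG hG by (simp add: m_assoc)
    also have "\<dots> = inv g \<otimes> (g \<otimes> h) \<otimes> inv g"
      by (simp add: comm(1)[OF that])
    also have "\<dots> = h \<otimes> inv g"
      using gG hG by (simp add: m_assoc[symmetric])
    finally show ?thesis .
  qed
  then show "inv g \<in> centralizer G A"
    using gG unfolding centralizer_def by simp
  have "g \<otimes> g' \<otimes> h = h \<otimes> (g \<otimes> g')" if "h \<in> A" for h
    using gG comm(1,2)[OF that] assms that by (metis m_assoc subsetD)
  then show "g \<otimes> g' \<in> centralizer G A"
    using gG unfolding centralizer_def by simp
qed

lemma (in group) centralizer_set_mult:
  assumes "H \<subseteq> carrier G" "K \<subseteq> carrier G" "\<one> \<in> H" "\<one> \<in> K"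
  shows "centralizer G (H <#> K) = centralizer G H \<inter> centralizer G K"
proof
  have "H \<subseteq> H <#> K" "K \<subseteq> H <#> K"
    using assms unfolding set_mult_def by force+
  then show "centralizer G (H <#> K) \<subseteq> centralizer G H \<inter> centralizer G K"
    using centralizer_antimono by blast
  show "centralizer G H \<inter> centralizer G K \<subseteq> centralizer G (H <#> K)"
  proof (clarsimp simp: centralizer_def set_mult_def)
    fix g h k
    assume g: "g \<in> carrier G" and h: "h \<in> H" and k: "k \<in> K"
      and "\<forall>h\<in>H. g \<otimes> h = h \<otimes> g" "\<forall>k\<in>K. g \<otimes> k = k \<otimes> g"
    then have comm: "g \<otimes> h = h \<otimes> g" "g \<otimes> k = k \<otimes> g"
      by auto
    have hk: "h \<in> carrier G" "k \<in> carrier G"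
      using h k assms by auto
    have "g \<otimes> (h \<otimes> k) = h \<otimes> (g \<otimes> k)"
      using g hk by (simp add: m_assoc[symmetric] comm(1))
    also have "\<dots> = h \<otimes> k \<otimes> g"
      using g hk by (simp add: m_assoc comm(2))
    finally show "g \<otimes> (h \<otimes> k) = h \<otimes> k \<otimes> g" .
  qed
qed

lemma (in group) subgroup_set_mult_centralizing:
  assumes H: "subgroup H G" and K: "subgroup K G" and HK: "K \<subseteq> centralizer G H"
  shows "subgroup (H <#> K) G"
proof -
  have carr: "H \<subseteq> carrier G" "K \<subseteq> carrier G"
    using H K subgroup.subset by auto
  have comm: "k \<otimes> h = h \<otimes> k" if "h \<in> H" "k \<in> K" for h k
    using HK that unfolding centralizer_def by blast
  show ?thesis
  proof (rule subgroupI)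
    show "H <#> K \<subseteq> carrier G"
      using carr unfolding set_mult_def by auto
    show "H <#> K \<noteq> {}"
      using subgroup.one_closed[OF H] subgroup.one_closed[OF K] unfolding set_mult_def by blast
  next
    fix a b assume "a \<in> H <#> K" "b \<in> H <#> K"
    then obtain h k h' k' where h: "h \<in> H" "h' \<in> H" and k: "k \<in> K" "k' \<in> K"
      and ab: "a = h \<otimes> k" "b = h' \<otimes> k'"
      unfolding set_mult_def by blast
    have hk: "h \<in> carrier G" "k \<in> carrier G" "h' \<in> carrier G" "k' \<in> carrier G"
      using h k carr by auto
    have "inv a = inv h \<otimes> inv k"
      using ab hk comm[OF subgroup.m_inv_closed[OF H h(1)] subgroup.m_inv_closed[OF K k(1)]]
      by (simp add: inv_mult_group)
    then show "inv a \<in> H <#> K"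
      using subgroup.m_inv_closed[OF H h(1)] subgroup.m_inv_closed[OF K k(1)]
      unfolding set_mult_def by blast
    have "a \<otimes> b = h \<otimes> (k \<otimes> h') \<otimes> k'"
      using ab hk by (simp add: m_assoc)
    also have "\<dots> = (h \<otimes> h') \<otimes> (k \<otimes> k')"
      using hk comm[OF h(2) k(1)] by (simp add: m_assoc)
    finally show "a \<otimes> b \<in> H <#> K"
      using subgroup.m_closed[OF H h] subgroup.m_closed[OF K k] unfolding set_mult_def by blast
  qed
qed

lemma (in group) subgroup_card_dvd:
  assumes "subgroup H G" "subgroup K G" "H \<subseteq> K"
  shows "card H dvd card K"
proof -
  have "card (rcosets\<^bsub>G\<lparr>carrier := K\<rparr>\<^esub> H) * card H = card K"
    using group.lagrange[OF subgroup_imp_group[OF assms(2)] subgroup_incl[OF assms]]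
    by (simp add: order_def)
  then show ?thesis by (metis dvd_triv_right)
qed

lemma (in group) is_sylow_intermediate:
  assumes p: "Factorial_Ring.prime p" and K: "finite K" "subgroup K G"
    and L: "subgroup L G" "S \<subseteq> L" "L \<subseteq> K"
    and S: "is_sylow (G\<lparr>carrier := K\<rparr>) p S"
  shows "is_sylow (G\<lparr>carrier := L\<rparr>) p S"
proof -
  have S_G: "subgroup S G" and card_S: "card S = p ^ multiplicity p (card K)"
    using S incl_subgroup[OF K(2)] by (auto simp: is_sylow_def order_def)
  have L_dvd_K: "card L dvd card K"
    using subgroup_card_dvd[OF L(1) K(2) L(3)] .
  have "card K \<noteq> 0"
    using K subgroup.one_closed[OF K(2)] by (auto simp: card_eq_0_iff)
  then have "card L \<noteq> 0"
    using L_dvd_K by auto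
  moreover have "p ^ multiplicity p (card K) dvd card L"
    using subgroup_card_dvd[OF S_G L(1,2)] card_S by simp
  ultimately have "multiplicity p (card K) \<le> multiplicity p (card L)"
    using p by (intro multiplicity_geI) (auto simp: not_prime_unit)
  moreover have "multiplicity p (card L) \<le> multiplicity p (card K)"
    using dvd_imp_multiplicity_le[OF L_dvd_K \<open>card K \<noteq> 0\<close>] .
  ultimately show ?thesis
    using subgroup_incl[OF S_G L(1,2)] card_S by (simp add: is_sylow_def order_def)
qed

lemma (in group) subgroup_subgroup_center:
  assumes "subgroup P G"
  shows "subgroup (subgroup_center G P) G"
  unfolding subgroup_center_def
  using subgroups_Inter_pair[OF assms subgroup_centralizer] assms subgroup.subset by blast

lemma (in group) subgroup_Omega1:
  assumes "H \<subseteq> carrier G"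
  shows "subgroup (Omega1 G p H) G"
  unfolding Omega1_def using assms by (auto intro: generate_is_subgroup)

lemma (in group) Omega1_subset:
  assumes "subgroup H G"
  shows "Omega1 G p H \<subseteq> H"
  unfolding Omega1_def using assms by (intro generate_subgroup_incl) auto

lemma (in group) set_mult_subset_subgroup:
  assumes "subgroup P G" "H \<subseteq> P" "K \<subseteq> P"
  shows "H <#> K \<subseteq> P"
  using mono_set_mult[OF assms(2,3), of G] subgroup_mult_id[OF assms(1)] by simp

lemma (in group) Int_centralizer_set_mult_central:
  assumes P: "subgroup P G" and C: "subgroup C G"
    and W: "subgroup W G" "W \<subseteq> subgroup_center G P"
  shows "P \<inter> centralizer G (C <#> W) = P \<inter> centralizer G C"
proof -
  have "P \<subseteq> centralizer G W"
    using W subset_centralizer_iff[where A = W and B = P]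
      subgroup.subset[OF P] subgroup.subset[OF W(1)]
    unfolding subgroup_center_def by blast
  then show ?thesis
    using centralizer_set_mult[of C W] C W(1) subgroup.subset subgroup.one_closed by blast
qed

lemma (in group) fully_centralized_set_mult_central:
  assumes fin: "finite (carrier G)" and p: "Factorial_Ring.prime p" and P: "subgroup P G"
    and C: "fully_centralized G p P C"
    and W: "subgroup W G" "W \<subseteq> subgroup_center G P"
  shows "fully_centralized G p P (C <#> W)"
proof -
  have C_G: "subgroup C G" and "C \<subseteq> P"
    and syl: "is_sylow (G\<lparr>carrier := centralizer G C\<rparr>) p (P \<inter> centralizer G C)"
    using C by (auto simp: fully_centralized_def)
  have W_cent: "W \<subseteq> centralizer G C"
    using W(2) centralizer_antimono[OF \<open>C \<subseteq> P\<close>] unfolding subgroup_center_def by blast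
  have CW_G: "subgroup (C <#> W) G"
    using subgroup_set_mult_centralizing[OF C_G W(1) W_cent] .
  have CW_P: "C <#> W \<subseteq> P"
    using set_mult_subset_subgroup[OF P \<open>C \<subseteq> P\<close>] W(2) unfolding subgroup_center_def by blast
  have eq: "P \<inter> centralizer G (C <#> W) = P \<inter> centralizer G C"
    using Int_centralizer_set_mult_central[OF P C_G W] .
  have "C \<subseteq> C <#> W"
    using subgroup.one_closed[OF W(1)] subgroup.subset[OF C_G] unfolding set_mult_def by force
  then have cent_CW_C: "centralizer G (C <#> W) \<subseteq> centralizer G C"
    by (rule centralizer_antimono)
  have cent_C: "subgroup (centralizer G C) G"
    using subgroup_centralizer[OF subgroup.subset[OF C_G]] .
  then have fin_cent_C: "finite (centralizer G C)"
    using fin finite_subset subgroup.subset by blast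
  have cent_CW: "subgroup (centralizer G (C <#> W)) G"
    using subgroup_centralizer[OF subgroup.subset[OF CW_G]] .
  have "P \<inter> centralizer G C \<subseteq> centralizer G (C <#> W)"
    using eq by blast
  then have "is_sylow (G\<lparr>carrier := centralizer G (C <#> W)\<rparr>) p (P \<inter> centralizer G C)"
    using is_sylow_intermediate[OF p fin_cent_C cent_C cent_CW _ cent_CW_C syl] by blast
  then show ?thesis
    using CW_G CW_P eq by (simp add: fully_centralized_def)
qed

theorem lemma5p11:
  fixes G (structure) and p :: nat and P C :: "'a set"
  assumes "group G" and "finite (carrier G)"
    and "Factorial_Ring.prime p" and "p dvd order G"
    and "is_sylow G p P"
    and "fully_centralized G p P C"
  shows "subgroup (C <#> Omega1 G p (subgroup_center G P)) G
         \<and> C <#> Omega1 G p (subgroup_center G P) \<subseteq> P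
         \<and> fully_centralized G p P (C <#> Omega1 G p (subgroup_center G P))
         \<and> P \<inter> centralizer G (C <#> Omega1 G p (subgroup_center G P)) = P \<inter> centralizer G C"
proof -
  interpret group G by fact
  have P: "subgroup P G"
    using assms(5) by (simp add: is_sylow_def)
  have Z: "subgroup (subgroup_center G P) G"
    using subgroup_subgroup_center[OF P] .
  define W where "W = Omega1 G p (subgroup_center G P)"
  have W: "subgroup W G" "W \<subseteq> subgroup_center G P"
    unfolding W_def using subgroup_Omega1 Omega1_subset[OF Z] subgroup.subset[OF Z] by auto
  have "fully_centralized G p P (C <#> W)"
    using fully_centralized_set_mult_central[OF assms(2,3) P assms(6) W] .
  moreover have "P \<inter> centralizer G (C <#> W) = P \<inter> centralizer G C"
    using Int_centralizer_set_mult_central[OF P _ W] assms(6) by (simp add: fully_centralized_def)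
  ultimately show ?thesis
    unfolding W_def fully_centralized_def by blast
qed

end
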